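(* Let $\mathbf{f}:\mathbb{R}^n\times\mathbb{R}^+\to\mathbb{R}^n$ be continuously differentiable in its first argument and $\sigma:\mathbb{R}^n\times\mathbb{R}^+\to\mathbb{R}^{n\times d}$, and assume the Lipschitz condition $\|\mathbf{f}(\mathbf{a},t)-\mathbf{f}(\mathbf{b},t)\|+\|\sigma(\mathbf{a},t)-\sigma(\mathbf{b},t)\|\le K_1\|\mathbf{a}-\mathbf{b}\|$ and the growth condition $\|\mathbf{f}(\mathbf{a},t)\|^2+\|\sigma(\mathbf{a},t)\|^2\le K_2(1+\|\mathbf{a}\|^2)$ for all $t\ge0$, $\mathbf{a},\mathbf{b}\in\mathbb{R}^n$, for some constants $K_1,K_2>0$. Assume: (H1) there is $\lambda>0$ such that for all $\mathbf{a},t$, the largest eigenvalue of the symmetric part of the Jacobian $\frac{\partial \mathbf{f}}{\partial \mathbf{a}}(\mathbf{a},t)$ is at most $-\lambda$; (H2) there is a constant $C$ such that for all $\mathbf{a},t$, $\mathrm{tr}(\sigma(\mathbf{a},t)^T\sigma(\mathbf{a},t))\le C$. Consider the augmented process $\mathbf{x}=(\mathbf{a},\mathbf{b})\in\mathbb{R}^{2n}$ satisfying the Itô equation $d\mathbf{x}=\begin{pmatrix}\mathbf{f}(\mathbf{a},t)\\ \mathbf{f}(\mathbf{b},t)\end{pmatrix}dt+\begin{pmatrix}\sigma(\mathbf{a},t)&0\\0&\sigma(\mathbf{b},t)\end{pmatrix}\begin{pmatrix}dW_1^d\\ dW_2^d\end{pmatrix}$, where $W_1^d,W_2^d$ are independent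 standard $d$-dimensional Wiener processes, and let $V(\mathbf{x})=\|\mathbf{a}-\mathbf{b}\|^2$. Then for every $\mathbf{x}$ (and every $t$), $\widetilde{A}V(\mathbf{x})\le -2\lambda V(\mathbf{x})+2C$, where $\widetilde{A}$ is the infinitesimal operator of the process $\mathbf{x}(t)$.
   Context: For the Itô process $d\mathbf{x}=\hat{\mathbf{f}}(\mathbf{x},t)dt+\hat\sigma(\mathbf{x},t)dW$ the infinitesimal operator $\widetilde A$ coincides with the differential generator $\mathscr{L}V=\frac{\partial V}{\partial t}+\frac{\partial V}{\partial\mathbf{x}}\hat{\mathbf{f}}(\mathbf{x},t)+\frac12\mathrm{tr}\big(\hat\sigma(\mathbf{x},t)^T\frac{\partial^2V}{\partial\mathbf{x}^2}\hat\sigma(\mathbf{x},t)\big)$. *)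

theory Defs
  imports "HOL-Analysis.Analysis"
begin

definition mat_eigenvalue :: "real^'n^'n \<Rightarrow> real \<Rightarrow> bool" where
  "mat_eigenvalue A \<mu> \<longleftrightarrow> (\<exists>v. v \<noteq> 0 \<and> A *v v = \<mu> *\<^sub>R v)"

definition sym_part :: "real^'n^'n \<Rightarrow> real^'n^'n" where
  "sym_part A = (1/2) *\<^sub>R (A + transpose A)"

text \<open>Differential generator of an Ito process dx = F(x,t) dt + G(x,t) dW applied to V:
  dV/dt + (dV/dx) F + 1/2 tr(G^T (d^2V/dx^2) G).\<close>
definition ito_generator ::
  "(real^'m \<Rightarrow> real \<Rightarrow> real) \<Rightarrow> (real^'m \<Rightarrow> real \<Rightarrow> real^'m)
   \<Rightarrow> (real^'m \<Rightarrow> real \<Rightarrow> real^'k^'m) \<Rightarrow> real^'m \<Rightarrow> real \<Rightarrow> real" where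
  "ito_generator V F G x t =
     deriv (\<lambda>s. V x s) t
     + frechet_derivative (\<lambda>y. V y t) (at x) (F x t)
     + (1/2) * (\<Sum>k\<in>UNIV. \<Sum>i\<in>UNIV. \<Sum>j\<in>UNIV.
          G x t $ i $ k
          * frechet_derivative (\<lambda>y. frechet_derivative (\<lambda>z. V z t) (at y) (axis j 1)) (at x) (axis i 1)
          * G x t $ j $ k)"

definition fstblk :: "real^('n::finite + 'n) \<Rightarrow> real^'n" where
  "fstblk x = (\<chi> i. x $ Inl i)"
definition sndblk :: "real^('n::finite + 'n) \<Rightarrow> real^'n" where
  "sndblk x = (\<chi> i. x $ Inr i)"

definition aug_drift :: "(real^'n::finite \<Rightarrow> real \<Rightarrow> real^'n) \<Rightarrow> real^('n+'n) \<Rightarrow> real \<Rightarrow> real^('n::finite+'n)" where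
  "aug_drift f x t = (\<chi> k. case k of Inl i \<Rightarrow> f (fstblk x) t $ i | Inr i \<Rightarrow> f (sndblk x) t $ i)"

definition aug_diff :: "(real^'n::finite \<Rightarrow> real \<Rightarrow> real^'d^'n) \<Rightarrow> real^('n+'n) \<Rightarrow> real \<Rightarrow> real^('d+'d)^('n::finite+'n)" where
  "aug_diff \<sigma> x t = (\<chi> k l. case (k, l) of
       (Inl i, Inl j) \<Rightarrow> \<sigma> (fstblk x) t $ i $ j
     | (Inr i, Inr j) \<Rightarrow> \<sigma> (sndblk x) t $ i $ j
     | _ \<Rightarrow> 0)"

definition aug_V :: "real^('n::finite+'n) \<Rightarrow> real \<Rightarrow> real" where
  "aug_V x t = (norm (fstblk x - sndblk x))\<^sup>2"

end

theory Submission
  imports Defs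
begin

text \<open>Since \<open>V\<close> does not depend on \<open>t\<close> and is the square of a linear function \<open>a - b\<close> of the
  state, its generator is \<open>2 (a - b)\<bullet>(f a - f b)\<close> plus the noise intensities
  \<open>tr(\<sigma>\<^sup>T\<sigma>)\<close> of the two (independent) copies. The latter are bounded by \<open>C\<close> each by (H2). For
  the former, the mean value theorem on the segment from \<open>b\<close> to \<open>a\<close> writes \<open>(a - b)\<bullet>(f a - f b)\<close>
  as a value of the quadratic form of the symmetric part of a Jacobian, which is bounded by its
  largest eigenvalue, hence by \<open>-\<lambda> \<parallel>a - b\<parallel>\<^sup>2\<close> by (H1).\<close>

lemma symmetric_matrix_inner_swap:
  fixes S :: "real^'n^'n"
  assumes "transpose S = S"
  shows "w \<bullet> (S *v v) = v \<bullet> (S *v w)"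
  by (metis assms dot_lmul_matrix inner_commute vector_transpose_matrix)

lemma transpose_sym_part [simp]: "transpose (sym_part A) = sym_part A"
  by (simp add: sym_part_def vec_eq_iff transpose_def)

lemma inner_sym_part_mult [simp]: "v \<bullet> (sym_part A *v v) = v \<bullet> (A *v v)"
proof -
  have "v \<bullet> (transpose A *v v) = v \<bullet> (A *v v)"
    by (simp add: dot_lmul_matrix[symmetric] inner_commute)
  then show ?thesis
    by (simp add: sym_part_def scaleR_matrix_vector_assoc[symmetric] matrix_vector_mult_add_rdistrib inner_add_right)
qed

lemma nonneg_linear_plus_quadratic_imp_zero:
  fixes A B :: real
  assumes "\<And>s. s * A + s\<^sup>2 * B \<ge> 0"
  shows "A = 0"
proof (rule ccontr)
  assume "A \<noteq> 0"
  define e where "e = 1 / (\<bar>B\<bar> + 1)"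
  have e: "e > 0" "e * \<bar>B\<bar> < 1" unfolding e_def by (auto simp: field_simps)
  have "(- e * A) * A + (- e * A)\<^sup>2 * B \<ge> 0" by (rule assms)
  then have "e * A\<^sup>2 * (e * B - 1) \<ge> 0" by (simp add: power2_eq_square algebra_simps)
  moreover have "e * A\<^sup>2 > 0" using e \<open>A \<noteq> 0\<close> by simp
  ultimately have "e * B \<ge> 1" by (simp add: zero_le_mult_iff)
  moreover have "e * B \<le> e * \<bar>B\<bar>" using e by (simp add: mult_left_mono)
  ultimately show False using e by linarith
qed

text \<open>The maximum of the quadratic form on the unit sphere is attained at some \<open>v\<^sub>0\<close>; the
  first-order condition of the maximum in every direction \<open>w\<close> makes \<open>v\<^sub>0\<close> an eigenvector.\<close>
lemma symmetric_matrix_max_eigenvalue: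
  fixes S :: "real^'n^'n"
  assumes sym: "transpose S = S"
  obtains \<mu> where "mat_eigenvalue S \<mu>" and "\<And>v. v \<bullet> (S *v v) \<le> \<mu> * (v \<bullet> v)"
proof -
  let ?q = "\<lambda>u::real^'n. u \<bullet> (S *v u)"
  have "continuous_on (sphere 0 1) ?q"
    by (intro continuous_intros linear_continuous_on matrix_vector_mul_linear)
  moreover have "sphere (0::real^'n) 1 \<noteq> {}"
    using vector_choose_size[of 1] by (auto simp: sphere_def)
  ultimately obtain v0 where "v0 \<in> sphere 0 1" and "\<forall>u \<in> sphere 0 1. ?q u \<le> ?q v0"
    using continuous_attains_sup[OF compact_sphere] by blast
  then have v0: "norm v0 = 1" and max: "\<And>u. norm u = 1 \<Longrightarrow> ?q u \<le> ?q v0"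
    by auto
  define \<mu> where "\<mu> = ?q v0"
  have v0_unit: "v0 \<bullet> v0 = 1" using v0 by (simp add: dot_square_norm)
  have bound: "?q u \<le> \<mu> * (u \<bullet> u)" for u
  proof (cases "u = 0")
    case False
    let ?u = "(1 / norm u) *\<^sub>R u"
    have "norm ?u = 1" using False by simp
    then have "?q ?u \<le> \<mu>" using max \<mu>_def by blast
    moreover have "?q u = (norm u)\<^sup>2 * ?q ?u" using False
      by (simp add: matrix_vector_mult_scaleR power2_eq_square)
    moreover have "u \<bullet> u = (norm u)\<^sup>2" by (simp add: dot_square_norm)
    ultimately show ?thesis
      by (metis mult.commute mult_right_mono zero_le_power2)
  qed simp
  have "w \<bullet> (S *v v0 - \<mu> *\<^sub>R v0) = 0" for w
  proof -
    have "s * (2 * (\<mu> * (w \<bullet> v0) - w \<bullet> (S *v v0))) + s\<^sup>2 * (\<mu> * (w \<bullet> w) - w \<bullet> (S *v w)) \<ge> 0" for s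
      using bound[of "v0 + s *\<^sub>R w"] symmetric_matrix_inner_swap[OF sym, of w v0]
      by (simp add: matrix_vector_right_distrib matrix_vector_mult_scaleR inner_add_left
          inner_add_right v0_unit \<mu>_def[symmetric] inner_commute[of v0 w] power2_eq_square algebra_simps)
    from nonneg_linear_plus_quadratic_imp_zero[OF this] show ?thesis
      by (simp add: inner_diff_right)
  qed
  then have "S *v v0 - \<mu> *\<^sub>R v0 = 0"
    by (metis inner_eq_zero_iff)
  then have "mat_eigenvalue S \<mu>"
    unfolding mat_eigenvalue_def using v0 by (intro exI[of _ v0]) auto
  then show ?thesis using bound by (rule that)
qed

lemma quadratic_form_le_of_eigenvalues_le:
  fixes S :: "real^'n^'n"
  assumes "transpose S = S" and "\<And>\<mu>. mat_eigenvalue S \<mu> \<Longrightarrow> \<mu> \<le> c"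
  shows "v \<bullet> (S *v v) \<le> c * (v \<bullet> v)"
proof -
  obtain \<mu> where "mat_eigenvalue S \<mu>" and "v \<bullet> (S *v v) \<le> \<mu> * (v \<bullet> v)"
    using symmetric_matrix_max_eigenvalue[OF assms(1)] by metis
  moreover have "\<mu> * (v \<bullet> v) \<le> c * (v \<bullet> v)"
    using assms(2)[OF \<open>mat_eigenvalue S \<mu>\<close>] by (simp add: mult_right_mono)
  ultimately show ?thesis by linarith
qed

lemma inner_diff_le_of_sym_jacobian_eigenvalues_le:
  fixes f :: "real^'n \<Rightarrow> real^'n"
  assumes diff: "\<And>a. f differentiable (at a)"
    and eig: "\<And>a \<mu>. mat_eigenvalue (sym_part (jacobian f (at a))) \<mu> \<Longrightarrow> \<mu> \<le> c"
  shows "(a - b) \<bullet> (f a - f b) \<le> c * (norm (a - b))\<^sup>2"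
proof -
  define v where "v = a - b"
  define J where "J s = jacobian f (at (b + s *\<^sub>R v))" for s
  define g where "g s = v \<bullet> f (b + s *\<^sub>R v)" for s
  have "(g has_real_derivative (v \<bullet> (J s *v v))) (at s)" for s
  proof -
    have "((\<lambda>s. b + s *\<^sub>R v) has_derivative (\<lambda>h. h *\<^sub>R v)) (at s)"
      by (auto intro!: derivative_eq_intros)
    moreover have "(f has_derivative (\<lambda>h. J s *v h)) (at (b + s *\<^sub>R v))"
      unfolding J_def using diff jacobian_works by blast
    ultimately have "((\<lambda>s. f (b + s *\<^sub>R v)) has_derivative (\<lambda>h. J s *v (h *\<^sub>R v))) (at s)"
      by (rule has_derivative_compose)
    then have "(g has_derivative (\<lambda>h. v \<bullet> (J s *v (h *\<^sub>R v)))) (at s)"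
      unfolding g_def by (rule has_derivative_inner_right)
    then show ?thesis unfolding has_field_derivative_def
      by (rule has_derivative_eq_rhs) (auto simp: matrix_vector_mult_scaleR fun_eq_iff)
  qed
  then obtain z where "g 1 - g 0 = v \<bullet> (J z *v v)"
    using MVT2[of 0 1 g "\<lambda>s. v \<bullet> (J s *v v)"] by force
  then have "v \<bullet> (f a - f b) = v \<bullet> (sym_part (J z) *v v)"
    by (simp add: g_def v_def inner_diff_right)
  also have "\<dots> \<le> c * (v \<bullet> v)"
    by (rule quadratic_form_le_of_eigenvalues_le) (auto simp: J_def eig)
  finally show ?thesis by (simp add: v_def power2_norm_eq_inner)
qed

lemma inner_bounded_linear_self_expansion:
  fixes P :: "real^'m \<Rightarrow> 'a::real_inner"
  assumes "bounded_linear P"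
  shows "P c \<bullet> P c = (\<Sum>i\<in>UNIV. \<Sum>j\<in>UNIV. c$i * (P (axis i 1) \<bullet> P (axis j 1)) * c$j)"
proof -
  interpret bounded_linear P by fact
  have "c = (\<Sum>i\<in>UNIV. c$i *\<^sub>R axis i 1)"
    using basis_expansion[of c] by (simp add: scalar_mult_eq_scaleR)
  then have Pc: "P c = (\<Sum>i\<in>UNIV. c$i *\<^sub>R P (axis i 1))"
    by (metis (no_types, lifting) scaleR sum sum.cong)
  show ?thesis
    unfolding Pc inner_sum_left inner_sum_right by (simp add: inner_commute ac_simps)
qed

lemma ito_generator_norm_square_linear:
  fixes P :: "real^'m \<Rightarrow> 'a::real_inner"
  assumes P: "bounded_linear P"
  shows "ito_generator (\<lambda>y t. (norm (P y))\<^sup>2) F G x t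
    = 2 * (P x \<bullet> P (F x t)) + (\<Sum>k\<in>UNIV. (norm (P (column k (G x t))))\<^sup>2)"
proof -
  have P_deriv: "(P has_derivative P) (at y)" for y
    using P by (rule bounded_linear.has_derivative[OF _ has_derivative_ident])
  have D: "frechet_derivative (\<lambda>z. (norm (P z))\<^sup>2) (at y) = (\<lambda>h. 2 * (P y \<bullet> P h))" for y
  proof -
    have "((\<lambda>z. P z \<bullet> P z) has_derivative (\<lambda>h. P y \<bullet> P h + P h \<bullet> P y)) (at y)"
      by (rule has_derivative_inner[OF P_deriv P_deriv])
    then have "((\<lambda>z. (norm (P z))\<^sup>2) has_derivative (\<lambda>h. 2 * (P y \<bullet> P h))) (at y)"
      unfolding power2_norm_eq_inner
      by (rule has_derivative_eq_rhs) (auto simp: inner_commute fun_eq_iff)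
    then show ?thesis by (metis frechet_derivative_at)
  qed
  have D2: "frechet_derivative (\<lambda>y. 2 * (P y \<bullet> P e)) (at x) = (\<lambda>h. 2 * (P h \<bullet> P e))" for e
  proof -
    have "((\<lambda>y. 2 * (P y \<bullet> P e)) has_derivative (\<lambda>h. 2 * (P h \<bullet> P e))) (at x)"
      by (intro has_derivative_mult_right has_derivative_inner_left P_deriv)
    then show ?thesis by (metis frechet_derivative_at)
  qed
  have hessian_term: "(\<Sum>i\<in>UNIV. \<Sum>j\<in>UNIV. M$i$k * (2 * (P (axis i 1) \<bullet> P (axis j 1))) * M$j$k)
      = 2 * (norm (P (column k M)))\<^sup>2" for M :: "real^'k^'m" and k
    unfolding power2_norm_eq_inner inner_bounded_linear_self_expansion[OF P]
    by (simp add: column_def sum_distrib_left mult.assoc mult.left_commute)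
  show ?thesis
    unfolding ito_generator_def D D2 hessian_term by (simp add: sum_distrib_left)
qed

lemma sum_norm_column_square_eq_trace:
  "(\<Sum>k\<in>UNIV. (norm (column k M))\<^sup>2) = trace (transpose M ** (M::real^'k^'m))"
  by (simp add: trace_def matrix_mult_transpose_dot_column power2_norm_eq_inner)

lemma linear_fstblk: "linear fstblk"
  by (auto simp: linear_iff fstblk_def vec_eq_iff)

lemma linear_sndblk: "linear sndblk"
  by (auto simp: linear_iff sndblk_def vec_eq_iff)

lemma aug_V_eq_norm_block_diff: "aug_V = (\<lambda>y t. (norm (fstblk y - sndblk y))\<^sup>2)"
  by (simp add: aug_V_def fun_eq_iff)

lemma blocks_aug_drift [simp]:
  "fstblk (aug_drift f x t) = f (fstblk x) t"
  "sndblk (aug_drift f x t) = f (sndblk x) t"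
  by (simp_all add: vec_eq_iff fstblk_def sndblk_def aug_drift_def)

lemma blocks_column_aug_diff [simp]:
  "fstblk (column (Inl l) (aug_diff \<sigma> x t)) = column l (\<sigma> (fstblk x) t)"
  "sndblk (column (Inl l) (aug_diff \<sigma> x t)) = 0"
  "fstblk (column (Inr l) (aug_diff \<sigma> x t)) = 0"
  "sndblk (column (Inr l) (aug_diff \<sigma> x t)) = column l (\<sigma> (sndblk x) t)"
  by (simp_all add: vec_eq_iff fstblk_def sndblk_def aug_diff_def column_def)

lemma ito_generator_aug_V:
  "ito_generator aug_V (aug_drift f) (aug_diff \<sigma>) x t
    = 2 * ((fstblk x - sndblk x) \<bullet> (f (fstblk x) t - f (sndblk x) t))
      + trace (transpose (\<sigma> (fstblk x) t) ** \<sigma> (fstblk x) t)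
      + trace (transpose (\<sigma> (sndblk x) t) ** \<sigma> (sndblk x) t)"
proof -
  have "bounded_linear (\<lambda>y. fstblk y - sndblk y)"
    using linear_fstblk linear_sndblk
    by (intro bounded_linear_sub) (simp_all add: linear_conv_bounded_linear)
  note generator = ito_generator_norm_square_linear[OF this, of "aug_drift f" "aug_diff \<sigma>" x t]
  show ?thesis
    unfolding aug_V_eq_norm_block_diff generator
    by (simp add: UNIV_Plus_UNIV[symmetric] sum.Plus sum_norm_column_square_eq_trace del: UNIV_Plus_UNIV)
qed

theorem lemma1:
  fixes f :: "real^'n \<Rightarrow> real \<Rightarrow> real^'n"
    and \<sigma> :: "real^'n \<Rightarrow> real \<Rightarrow> real^'d^'n"
    and lam C :: real
  assumes diff: "\<And>a t. t \<ge> 0 \<Longrightarrow> (\<lambda>y. f y t) differentiable (at a)"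
    and cont_diff: "\<And>t. t \<ge> 0 \<Longrightarrow> continuous_on UNIV (\<lambda>a. jacobian (\<lambda>y. f y t) (at a))"
    and lip: "\<exists>K1>0. \<forall>t\<ge>0. \<forall>a b.
       norm (f a t - f b t) + norm (\<sigma> a t - \<sigma> b t) \<le> K1 * norm (a - b)"
    and growth: "\<exists>K2>0. \<forall>t\<ge>0. \<forall>a.
       (norm (f a t))\<^sup>2 + (norm (\<sigma> a t))\<^sup>2 \<le> K2 * (1 + (norm a)\<^sup>2)"
    and lam_pos: "lam > 0"
    and H1: "\<And>a t \<mu>. t \<ge> 0 \<Longrightarrow> mat_eigenvalue (sym_part (jacobian (\<lambda>y. f y t) (at a))) \<mu> \<Longrightarrow> \<mu> \<le> - lam"
    and H2: "\<And>a t. t \<ge> 0 \<Longrightarrow> trace (transpose (\<sigma> a t) ** \<sigma> a t) \<le> C"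
    and t: "t \<ge> 0"
  shows "ito_generator aug_V (aug_drift f) (aug_diff \<sigma>) x t \<le> - 2 * lam * aug_V x t + 2 * C"
proof -
  \<comment> \<open>The Lipschitz, growth and continuity hypotheses only make the SDE well posed; the
    pointwise bound on the generator needs none of them.\<close>
  let ?a = "fstblk x" and ?b = "sndblk x"
  have "(?a - ?b) \<bullet> (f ?a t - f ?b t) \<le> - lam * (norm (?a - ?b))\<^sup>2"
    using diff H1 t by (intro inner_diff_le_of_sym_jacobian_eigenvalues_le) auto
  moreover have "aug_V x t = (norm (?a - ?b))\<^sup>2"
    by (simp add: aug_V_def)
  ultimately show ?thesis
    unfolding ito_generator_aug_V using H2[OF t, of ?a] H2[OF t, of ?b] by simp
qed

end
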